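(* Let $w/u$ be a skew partition of length $r$, $v$ a partition with $|v|=\operatorname{card}\mathcal D(w/u)$, and $c=(c_1,c_2):\mathcal D(w/u)\to Y(v)$ a bijection with inverse $b=(b_1,b_2)$. Then $c$ satisfies the LR rules if and only if all of the following hold: (h) for $(i,j),(i',j)\in\mathcal D(w/u)$ with $i<i'$: $c_1(i,j)<c_1(i',j)$; (th) for $(i,j),(i',j)\in\mathcal D(w/u)$ with $i<i'$: $c_2(i,j)\ge c_2(i',j)$; (w) for $(i,j),(i,j')\in\mathcal D(w/u)$ with $j<j'$: $c_2(i,j)>c_2(i,j')$; (tw) for $(i,j),(i,j')\in\mathcal D(w/u)$ with $j<j'$: $c_1(i,j)\le c_1(i,j')$; (h') for $(i,j),(i',j)\in Y(v)$ with $i<i'$: $b_1(i,j)<b_1(i',j)$; (th') for $(i,j),(i',j)\in Y(v)$ with $i<i'$: $b_2(i,j)\ge b_2(i',j)$; (w') for $(i,j),(i,j')\in Y(v)$ with $j<j'$: $b_2(i,j)>b_2(i,j')$; (tw') for $(i,j),(i,j')\in Y(v)$ with $j<j'$: $b_1(i,j)\le b_1(i,j')$.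
   Context: A generalized partition of length $r$ is a weakly decreasing sequence $u=(u_1,\dots,u_r)$ of integers; its diagram is $\mathcal D(u)=\{(i,j)\in\{1,\dots,r\}\times\mathbb Z: j\le u_i\}$. If $\mathcal D(u)\subset\mathcal D(w)$, the pair forms a skew partition $w/u$ with diagram $\mathcal D(w/u)=\mathcal D(w)\setminus\mathcal D(u)$. For an ordinary partition $v$, $Y(v)=\{(i,j): i\ge1,\ 1\le j\le v_i\}$. For $(i,j)$, $i$ is the height (row index) and $j$ the width (column index). The Littlewood–Richardson order on $\mathcal D(w/u)$ is the total order with $(i,j)<_{LR}(i',j')$ if $i<i'$, and $(i,j)<_{LR}(i,j')$ if $j>j'$. For $x\in\mathcal D(w/u)$ put $C(x)=\{c(y): y\le_{LR}x\}$. A bijection $c=(c_1,c_2):\mathcal D(w/u)\to Y(v)$ satisfies the LR rules iff (L1) $c_1$ is strictly increasing (in the height) on each column of $\mathcal D(w/u)$, (L2) $c_1$ is weakly increasing (in the width) on each row of $\mathcal D(w/u)$, and (Y) for each $x\in\mathcal D(w/u)$, $C(x)$ is a Young diagram, i.e. equals $Y(\mu)$ for some partition $\mu$. *)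

theory Defs
  imports Main
begin

text \<open>Generalized partition of length r: weakly decreasing u_1,...,u_r of integers
  (represented as a function on nat, only indices 1..r matter).\<close>
definition gen_partition :: "nat \<Rightarrow> (nat \<Rightarrow> int) \<Rightarrow> bool" where
  "gen_partition r u \<longleftrightarrow> (\<forall>i j. 1 \<le> i \<longrightarrow> i \<le> j \<longrightarrow> j \<le> r \<longrightarrow> u j \<le> u i)"

definition gdiagram :: "nat \<Rightarrow> (nat \<Rightarrow> int) \<Rightarrow> (nat \<times> int) set" where
  "gdiagram r u = {(i, j). 1 \<le> i \<and> i \<le> r \<and> j \<le> u i}"

definition skew_partition :: "nat \<Rightarrow> (nat \<Rightarrow> int) \<Rightarrow> (nat \<Rightarrow> int) \<Rightarrow> bool" where
  "skew_partition r w u \<longleftrightarrow> gen_partition r w \<and> gen_partition r u \<and> gdiagram r u \<subseteq> gdiagram r w"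

definition skew_diagram :: "nat \<Rightarrow> (nat \<Rightarrow> int) \<Rightarrow> (nat \<Rightarrow> int) \<Rightarrow> (nat \<times> int) set" where
  "skew_diagram r w u = gdiagram r w - gdiagram r u"

text \<open>Ordinary partition v_1 \<ge> v_2 \<ge> ... \<ge> 0, finitely many nonzero parts (index 0 ignored).\<close>
definition is_partition :: "(nat \<Rightarrow> nat) \<Rightarrow> bool" where
  "is_partition v \<longleftrightarrow> (\<forall>i j. 1 \<le> i \<longrightarrow> i \<le> j \<longrightarrow> v j \<le> v i) \<and> finite {i. 1 \<le> i \<and> v i \<noteq> 0}"

definition partition_size :: "(nat \<Rightarrow> nat) \<Rightarrow> nat" where
  "partition_size v = (\<Sum>i\<in>{i. 1 \<le> i \<and> v i \<noteq> 0}. v i)"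

definition young :: "(nat \<Rightarrow> nat) \<Rightarrow> (nat \<times> nat) set" where
  "young v = {(i, j). 1 \<le> i \<and> 1 \<le> j \<and> j \<le> v i}"

definition is_young_diagram :: "(nat \<times> nat) set \<Rightarrow> bool" where
  "is_young_diagram S \<longleftrightarrow> (\<exists>\<mu>. is_partition \<mu> \<and> S = young \<mu>)"

definition lr_le :: "nat \<times> int \<Rightarrow> nat \<times> int \<Rightarrow> bool" where
  "lr_le x y \<longleftrightarrow> fst x < fst y \<or> (fst x = fst y \<and> snd x \<ge> snd y)"

definition LR_rules :: "nat \<Rightarrow> (nat \<Rightarrow> int) \<Rightarrow> (nat \<Rightarrow> int) \<Rightarrow> (nat \<times> int \<Rightarrow> nat \<times> nat) \<Rightarrow> bool" where
  "LR_rules r w u c \<longleftrightarrow>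
     (\<forall>i i' j. (i, j) \<in> skew_diagram r w u \<longrightarrow> (i', j) \<in> skew_diagram r w u \<longrightarrow> i < i'
        \<longrightarrow> fst (c (i, j)) < fst (c (i', j))) \<and>
     (\<forall>i j j'. (i, j) \<in> skew_diagram r w u \<longrightarrow> (i, j') \<in> skew_diagram r w u \<longrightarrow> j < j'
        \<longrightarrow> fst (c (i, j)) \<le> fst (c (i, j'))) \<and>
     (\<forall>x \<in> skew_diagram r w u.
        is_young_diagram (c ` {y \<in> skew_diagram r w u. lr_le y x}))"

end

theory Submission
  imports Defs "HOL-Library.Product_Order"
begin

(* The rule (Y) says exactly that the inverse b is monotone from the componentwise order on Y(v)
   to the LR order on D(w/u), because C(x) is the set of cells y of Y(v) with b y <=LR x.
   It suffices to check this monotonicity along rows and columns of Y(v), where it amounts to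
   (h'), (w') and (tw'); this gives the "if" direction.  Conversely, (L1), (L2) and the
   monotonicity of b yield the remaining conditions, using that a skew diagram contains every
   cell lying componentwise between two of its cells.  Only (th) needs more than a local
   argument: by (w') and (w), a violation of (th) in some column produces one in a column
   further to the left, so it follows by induction on the column. *)

lemma lr_le_refl [simp]: "lr_le x x"
  by (simp add: lr_le_def)

lemma lr_le_trans: "lr_le x y \<Longrightarrow> lr_le y z \<Longrightarrow> lr_le x z"
  by (auto simp: lr_le_def)

lemma lr_le_Pair: "lr_le (i, j) (i', j') \<longleftrightarrow> i < i' \<or> (i = i' \<and> j' \<le> j)"
  by (simp add: lr_le_def)

lemma mem_young: "(a, k) \<in> young v \<longleftrightarrow> (1, 1) \<le> (a, k) \<and> k \<le> v a"
  by (auto simp: young_def)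

lemma young_down_closed:
  assumes "is_partition v" "y' \<in> young v" "(1, 1) \<le> y" "y \<le> y'"
  shows "y \<in> young v"
proof -
  obtain a k a' k' where "y = (a, k)" "y' = (a', k')" by fastforce
  with assms have "k \<le> v a'" "v a' \<le> v a"
    by (auto simp: mem_young is_partition_def)
  with assms \<open>y = (a, k)\<close> show ?thesis
    by (simp add: mem_young)
qed

lemma is_young_diagram_down_closed:
  "is_young_diagram S \<Longrightarrow> y' \<in> S \<Longrightarrow> (1, 1) \<le> y \<Longrightarrow> y \<le> y' \<Longrightarrow> y \<in> S"
  by (auto simp: is_young_diagram_def intro: young_down_closed)

lemma is_young_diagramI:
  assumes fin: "finite S" and pos: "\<And>y. y \<in> S \<Longrightarrow> (1, 1) \<le> y"
    and down: "\<And>y y'. y' \<in> S \<Longrightarrow> (1, 1) \<le> y \<Longrightarrow> y \<le> y' \<Longrightarrow> y \<in> S"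
  shows "is_young_diagram S"
proof -
  define \<mu> where "\<mu> a = Max (insert 0 {k. (a, k) \<in> S})" for a
  have fin_row: "finite {k. (a, k) \<in> S}" for a
    using finite_imageI [OF fin, of snd] by (rule rev_finite_subset) force
  have le_\<mu>: "(a, k) \<in> S \<Longrightarrow> k \<le> \<mu> a" for a k
    using fin_row [of a] by (simp add: \<mu>_def)
  have \<mu>_in: "(a, \<mu> a) \<in> S" if "\<mu> a \<noteq> 0" for a
    using Max_in [of "insert 0 {k. (a, k) \<in> S}"] fin_row [of a] that by (auto simp: \<mu>_def)
  have "S = young \<mu>"
  proof
    show "S \<subseteq> young \<mu>"
      using pos le_\<mu> by (force simp: young_def)
    show "young \<mu> \<subseteq> S"
      using down \<mu>_in by (force simp: young_def)
  qed
  moreover have "\<mu> j \<le> \<mu> i" if "1 \<le> i" "i \<le> j" for i j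
    using down [OF \<mu>_in, of j "(i, \<mu> j)"] le_\<mu> that by (cases "\<mu> j = 0") auto
  moreover have "finite {i. 1 \<le> i \<and> \<mu> i \<noteq> 0}"
    using finite_imageI [OF fin, of fst] by (rule rev_finite_subset) (use \<mu>_in in force)
  ultimately show ?thesis
    unfolding is_young_diagram_def is_partition_def by blast
qed

lemma mem_skew_diagram:
  "(i, j) \<in> skew_diagram r w u \<longleftrightarrow> 1 \<le> i \<and> i \<le> r \<and> u i < j \<and> j \<le> w i"
  by (auto simp: skew_diagram_def gdiagram_def)

lemma finite_skew_diagram: "finite (skew_diagram r w u)"
proof (rule finite_subset)
  show "skew_diagram r w u \<subseteq> (\<Union>i\<in>{1..r}. {i} \<times> {u i<..w i})"
    by (auto simp: skew_diagram_def gdiagram_def)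
qed auto

lemma skew_diagram_order_convex:
  assumes "skew_partition r w u" "x \<in> skew_diagram r w u" "z \<in> skew_diagram r w u" "x \<le> y" "y \<le> z"
  shows "y \<in> skew_diagram r w u"
proof -
  obtain p q i j p' q' where "x = (p, q)" "y = (i, j)" "z = (p', q')"
    by (metis surj_pair)
  with assms have "1 \<le> p" "p \<le> i" "i \<le> p'" "p' \<le> r" "u p < q" "q \<le> j" "j \<le> q'" "q' \<le> w p'"
    by (auto simp: mem_skew_diagram)
  moreover from assms(1) this have "u i \<le> u p" "w p' \<le> w i"
    by (auto simp: skew_partition_def gen_partition_def)
  ultimately show ?thesis
    using \<open>y = (i, j)\<close> by (simp add: mem_skew_diagram)
qed

lemma skew_diagram_column_gt:
  assumes "skew_partition r w u" "(i, j) \<in> skew_diagram r w u"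
  shows "u r < j"
  using assms by (fastforce simp: mem_skew_diagram skew_partition_def gen_partition_def)

locale skew_young_bijection =
  fixes r :: nat and w u :: "nat \<Rightarrow> int" and v :: "nat \<Rightarrow> nat"
    and c :: "nat \<times> int \<Rightarrow> nat \<times> nat" and b :: "nat \<times> nat \<Rightarrow> nat \<times> int"
  assumes skew: "skew_partition r w u"
    and partition: "is_partition v"
    and bij: "bij_betw c (skew_diagram r w u) (young v)"
    and b_c [simp]: "x \<in> skew_diagram r w u \<Longrightarrow> b (c x) = x"
    and c_b [simp]: "y \<in> young v \<Longrightarrow> c (b y) = y"
begin

abbreviation D where "D \<equiv> skew_diagram r w u"
abbreviation Y where "Y \<equiv> young v"

lemma c_in_Y: "x \<in> D \<Longrightarrow> c x \<in> Y"
  using bij by (auto simp: bij_betw_def)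

lemma b_in_D: "y \<in> Y \<Longrightarrow> b y \<in> D"
  by (metis b_c bij bij_betw_def imageE)

lemma mem_c_image_iff: "y \<in> Y \<Longrightarrow> A \<subseteq> D \<Longrightarrow> y \<in> c ` A \<longleftrightarrow> b y \<in> A"
  by (metis b_c c_b image_eqI imageE subsetD)

lemma Y_down_closed: "y' \<in> Y \<Longrightarrow> (1, 1) \<le> y \<Longrightarrow> y \<le> y' \<Longrightarrow> y \<in> Y"
  using partition by (rule young_down_closed)

lemma young_condition_iff_monotone:
  "(\<forall>x\<in>D. is_young_diagram (c ` {z \<in> D. lr_le z x})) \<longleftrightarrow> monotone_on Y (\<le>) lr_le b"
proof
  assume young: "\<forall>x\<in>D. is_young_diagram (c ` {z \<in> D. lr_le z x})"
  show "monotone_on Y (\<le>) lr_le b"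
  proof (rule monotone_onI)
    fix y y' assume "y \<in> Y" "y' \<in> Y" "y \<le> y'"
    have "y' \<in> c ` {z \<in> D. lr_le z (b y')}"
      using \<open>y' \<in> Y\<close> b_in_D by (simp add: mem_c_image_iff)
    moreover have "(1, 1) \<le> y"
      using \<open>y \<in> Y\<close> by (auto simp: young_def)
    ultimately have "y \<in> c ` {z \<in> D. lr_le z (b y')}"
      using young b_in_D \<open>y' \<in> Y\<close> \<open>y \<le> y'\<close> by (blast intro: is_young_diagram_down_closed)
    then show "lr_le (b y) (b y')"
      by auto
  qed
next
  assume mono: "monotone_on Y (\<le>) lr_le b"
  show "\<forall>x\<in>D. is_young_diagram (c ` {z \<in> D. lr_le z x})"
  proof (intro ballI is_young_diagramI)
    fix x assume "x \<in> D"
    show "finite (c ` {z \<in> D. lr_le z x})"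
      using finite_skew_diagram by simp
    show "(1, 1) \<le> y" if "y \<in> c ` {z \<in> D. lr_le z x}" for y
      using that c_in_Y by (force simp: young_def)
    show "y \<in> c ` {z \<in> D. lr_le z x}"
      if "y' \<in> c ` {z \<in> D. lr_le z x}" "(1, 1) \<le> y" "y \<le> y'" for y y'
    proof -
      from that(1) obtain z where z: "z \<in> D" "lr_le z x" "y' = c z"
        by blast
      then have "y \<in> Y"
        using c_in_Y that(2,3) Y_down_closed by blast
      moreover have "lr_le (b y) x"
        using monotone_onD [OF mono \<open>y \<in> Y\<close> c_in_Y [OF z(1)]] that(3) z lr_le_trans by auto
      ultimately show ?thesis
        using b_in_D by (simp add: mem_c_image_iff)
    qed
  qed
qed

lemma monotone_on_bI:
  assumes column: "\<And>a a' k. (a, k) \<in> Y \<Longrightarrow> (a', k) \<in> Y \<Longrightarrow> a < a' \<Longrightarrow> fst (b (a, k)) < fst (b (a', k))"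
    and row_snd: "\<And>a k k'. (a, k) \<in> Y \<Longrightarrow> (a, k') \<in> Y \<Longrightarrow> k < k' \<Longrightarrow> snd (b (a, k)) > snd (b (a, k'))"
    and row_fst: "\<And>a k k'. (a, k) \<in> Y \<Longrightarrow> (a, k') \<in> Y \<Longrightarrow> k < k' \<Longrightarrow> fst (b (a, k)) \<le> fst (b (a, k'))"
  shows "monotone_on Y (\<le>) lr_le b"
proof (rule monotone_onI)
  fix y y' assume "y \<in> Y" "y' \<in> Y" "y \<le> y'"
  obtain a k a' k' where y: "y = (a, k)" "y' = (a', k')"
    by fastforce
  have "(a, k') \<in> Y"
    using Y_down_closed [of y' "(a, k')"] \<open>y \<in> Y\<close> \<open>y' \<in> Y\<close> \<open>y \<le> y'\<close> y
    by (auto simp: mem_young)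
  have "(a, k) \<in> Y" "k \<le> k'" "a \<le> a'"
    using \<open>y \<in> Y\<close> \<open>y \<le> y'\<close> y by auto
  have "lr_le (b (a, k)) (b (a, k'))"
  proof (cases "k = k'")
    case False
    with \<open>k \<le> k'\<close> have "k < k'" by simp
    then show ?thesis
      using row_snd row_fst \<open>(a, k) \<in> Y\<close> \<open>(a, k') \<in> Y\<close> by (fastforce simp: lr_le_def)
  qed simp
  moreover have "lr_le (b (a, k')) (b (a', k'))"
    using column [OF \<open>(a, k') \<in> Y\<close>] \<open>y' \<in> Y\<close> \<open>a \<le> a'\<close> y
    by (cases "a = a'") (auto simp: lr_le_def)
  ultimately show "lr_le (b y) (b y')"
    using y lr_le_trans by blast
qed

lemma LR_rules_iff_monotone:
  "LR_rules r w u c \<longleftrightarrow>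
     (\<forall>i i' j. (i, j) \<in> D \<longrightarrow> (i', j) \<in> D \<longrightarrow> i < i' \<longrightarrow> fst (c (i, j)) < fst (c (i', j))) \<and>
     (\<forall>i j j'. (i, j) \<in> D \<longrightarrow> (i, j') \<in> D \<longrightarrow> j < j' \<longrightarrow> fst (c (i, j)) \<le> fst (c (i, j'))) \<and>
     monotone_on Y (\<le>) lr_le b"
  unfolding LR_rules_def young_condition_iff_monotone ..

lemma LR_rulesI:
  assumes "\<And>i i' j. (i, j) \<in> D \<Longrightarrow> (i', j) \<in> D \<Longrightarrow> i < i' \<Longrightarrow> fst (c (i, j)) < fst (c (i', j))"
    and "\<And>i j j'. (i, j) \<in> D \<Longrightarrow> (i, j') \<in> D \<Longrightarrow> j < j' \<Longrightarrow> fst (c (i, j)) \<le> fst (c (i, j'))"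
    and "\<And>a a' k. (a, k) \<in> Y \<Longrightarrow> (a', k) \<in> Y \<Longrightarrow> a < a' \<Longrightarrow> fst (b (a, k)) < fst (b (a', k))"
    and "\<And>a k k'. (a, k) \<in> Y \<Longrightarrow> (a, k') \<in> Y \<Longrightarrow> k < k' \<Longrightarrow> snd (b (a, k)) > snd (b (a, k'))"
    and "\<And>a k k'. (a, k) \<in> Y \<Longrightarrow> (a, k') \<in> Y \<Longrightarrow> k < k' \<Longrightarrow> fst (b (a, k)) \<le> fst (b (a, k'))"
  shows "LR_rules r w u c"
  using assms monotone_on_bI by (simp add: LR_rules_iff_monotone)

end

locale LR_tableau = skew_young_bijection +
  assumes LR_rules: "LR_rules r w u c"
begin

lemma c_fst_strict_mono_column:
  "(i, j) \<in> D \<Longrightarrow> (i', j) \<in> D \<Longrightarrow> i < i' \<Longrightarrow> fst (c (i, j)) < fst (c (i', j))"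
  using LR_rules by (auto simp: LR_rules_iff_monotone)

lemma c_fst_mono_row:
  "(i, j) \<in> D \<Longrightarrow> (i, j') \<in> D \<Longrightarrow> j \<le> j' \<Longrightarrow> fst (c (i, j)) \<le> fst (c (i, j'))"
  using LR_rules by (cases "j = j'") (auto simp: LR_rules_iff_monotone)

lemma b_monotone: "y \<in> Y \<Longrightarrow> y' \<in> Y \<Longrightarrow> y \<le> y' \<Longrightarrow> lr_le (b y) (b y')"
  using LR_rules by (auto simp: LR_rules_iff_monotone monotone_on_def)

lemma c_snd_strict_antimono_row:
  assumes "(i, j) \<in> D" "(i, j') \<in> D" "j < j'"
  shows "snd (c (i, j)) > snd (c (i, j'))"
proof (rule ccontr)
  assume "\<not> ?thesis"
  with c_fst_mono_row [OF assms(1,2)] assms(3) have "c (i, j) \<le> c (i, j')"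
    by (simp add: less_eq_prod_def)
  then have "lr_le (i, j) (i, j')"
    using b_monotone c_in_Y assms(1,2) by fastforce
  with assms(3) show False
    by (simp add: lr_le_Pair)
qed

lemma b_fst_mono_row:
  "(a, k) \<in> Y \<Longrightarrow> (a, k') \<in> Y \<Longrightarrow> k \<le> k' \<Longrightarrow> fst (b (a, k)) \<le> fst (b (a, k'))"
  using b_monotone [of "(a, k)" "(a, k')"] by (auto simp: lr_le_def)

lemma b_fst_strict_mono_column:
  assumes "(a, k) \<in> Y" "(a', k) \<in> Y" "a < a'"
  shows "fst (b (a, k)) < fst (b (a', k))"
proof (rule ccontr)
  assume not_less: "\<not> ?thesis"
  obtain p q q' where b: "b (a, k) = (p, q)" "b (a', k) = (p, q')"
    using b_monotone [of "(a, k)" "(a', k)"] assms not_less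
    by (cases "b (a, k)"; cases "b (a', k)") (auto simp: lr_le_def)
  then have "q' \<le> q"
    using b_monotone [of "(a, k)" "(a', k)"] assms by (simp add: lr_le_Pair)
  then have "fst (c (p, q')) \<le> fst (c (p, q))"
    using b_in_D assms(1,2) b by (metis c_fst_mono_row)
  with b assms show False
    by (metis c_b fst_conv not_le)
qed

lemma b_snd_strict_antimono_row:
  assumes "(a, k) \<in> Y" "(a, k') \<in> Y" "k < k'"
  shows "snd (b (a, k)) > snd (b (a, k'))"
proof (rule ccontr)
  assume not_less: "\<not> ?thesis"
  obtain p q p' q' where b: "b (a, k) = (p, q)" "b (a, k') = (p', q')"
    by fastforce
  have in_D: "(p, q) \<in> D" "(p', q') \<in> D" and c: "c (p, q) = (a, k)" "c (p', q') = (a, k')"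
    using b_in_D c_b assms(1,2) b by metis+
  have "q \<le> q'"
    using not_less b by simp
  moreover have "(p, q) \<noteq> (p', q')"
    using c assms(3) by auto
  ultimately have "p < p'"
    using b_monotone [of "(a, k)" "(a, k')"] assms b by (auto simp: lr_le_Pair)
  have "(p', q) \<in> D"
    using skew_diagram_order_convex [OF skew in_D, of "(p', q)"] \<open>p < p'\<close> \<open>q \<le> q'\<close> by simp
  then have "a < fst (c (p', q))" "fst (c (p', q)) \<le> a"
    using c_fst_strict_mono_column [OF in_D(1) _ \<open>p < p'\<close>]
      c_fst_mono_row [OF _ in_D(2) \<open>q \<le> q'\<close>] c
    by auto
  then show False
    by simp
qed

lemma c_snd_antimono_column:
  assumes "(i, j) \<in> D" "(i', j) \<in> D" "i < i'"
  shows "snd (c (i', j)) \<le> snd (c (i, j))"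
  using assms
proof (induction "nat (j - u r)" arbitrary: i i' j rule: less_induct)
  case less
  obtain a k a' k' where c: "c (i, j) = (a, k)" "c (i', j) = (a', k')"
    by fastforce
  have in_Y: "(a, k) \<in> Y" "(a', k') \<in> Y"
    using c_in_Y less.prems c by metis+
  show ?case
  proof (rule ccontr)
    assume "\<not> snd (c (i', j)) \<le> snd (c (i, j))"
    then have "k < k'"
      using c by simp
    have "a < a'"
      using c_fst_strict_mono_column [OF less.prems] c by simp
    then have "(a, k') \<in> Y"
      using Y_down_closed [OF in_Y(2), of "(a, k')"] in_Y(1) \<open>k < k'\<close> by (simp add: mem_young)
    obtain p q where pq: "b (a, k') = (p, q)"
      by fastforce
    have "(p, q) \<in> D" "c (p, q) = (a, k')"
      using b_in_D c_b \<open>(a, k') \<in> Y\<close> pq by metis+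
    have "q < j"
      using b_snd_strict_antimono_row [OF in_Y(1) \<open>(a, k') \<in> Y\<close> \<open>k < k'\<close>] less.prems(1) c pq
      by (metis b_c snd_conv)
    moreover have "lr_le (p, q) (i', j)"
      using b_monotone [OF \<open>(a, k') \<in> Y\<close> in_Y(2)] \<open>a < a'\<close> less.prems(2) c pq
      by (metis b_c less_imp_le order_refl Pair_le)
    ultimately have "p < i'"
      by (auto simp: lr_le_Pair)
    have "(i', q) \<in> D"
      using skew_diagram_order_convex [OF skew \<open>(p, q) \<in> D\<close> less.prems(2), of "(i', q)"]
        \<open>p < i'\<close> \<open>q < j\<close> by simp
    have "nat (q - u r) < nat (j - u r)"
      using skew_diagram_column_gt [OF skew \<open>(p, q) \<in> D\<close>] \<open>q < j\<close> by simp
    then have "snd (c (i', q)) \<le> k'"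
      using less.hyps [OF _ \<open>(p, q) \<in> D\<close> \<open>(i', q) \<in> D\<close> \<open>p < i'\<close>] \<open>c (p, q) = (a, k')\<close> by simp
    moreover have "k' < snd (c (i', q))"
      using c_snd_strict_antimono_row [OF \<open>(i', q) \<in> D\<close> less.prems(2) \<open>q < j\<close>] c by simp
    ultimately show False
      by simp
  qed
qed

lemma b_snd_antimono_column:
  assumes "(a, k) \<in> Y" "(a', k) \<in> Y" "a < a'"
  shows "snd (b (a', k)) \<le> snd (b (a, k))"
proof (rule ccontr)
  assume not_le: "\<not> ?thesis"
  obtain p q p' q' where b: "b (a, k) = (p, q)" "b (a', k) = (p', q')"
    by fastforce
  have in_D: "(p, q) \<in> D" "(p', q') \<in> D" and c: "c (p, q) = (a, k)" "c (p', q') = (a', k)"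
    using b_in_D c_b assms(1,2) b by metis+
  have "q < q'"
    using not_le b by simp
  have "p < p'"
    using b_fst_strict_mono_column [OF assms] b by simp
  have "(p, q') \<in> D"
    using skew_diagram_order_convex [OF skew in_D, of "(p, q')"] \<open>p < p'\<close> \<open>q < q'\<close> by simp
  then have "snd (c (p, q')) < k" "k \<le> snd (c (p, q'))"
    using c_snd_strict_antimono_row [OF in_D(1) _ \<open>q < q'\<close>]
      c_snd_antimono_column [OF _ in_D(2) \<open>p < p'\<close>] c
    by auto
  then show False
    by simp
qed

lemmas tableau_conditions =
  c_fst_strict_mono_column c_snd_antimono_column c_snd_strict_antimono_row c_fst_mono_row
  b_fst_strict_mono_column b_snd_antimono_column b_snd_strict_antimono_row b_fst_mono_row

end

theorem proposition4p11:
  fixes r :: nat and w u :: "nat \<Rightarrow> int" and v :: "nat \<Rightarrow> nat"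
    and c :: "nat \<times> int \<Rightarrow> nat \<times> nat" and b :: "nat \<times> nat \<Rightarrow> nat \<times> int"
  assumes "skew_partition r w u"
    and "is_partition v"
    and "partition_size v = card (skew_diagram r w u)"
    and "bij_betw c (skew_diagram r w u) (young v)"
    and "\<forall>x \<in> skew_diagram r w u. b (c x) = x"
    and "\<forall>y \<in> young v. c (b y) = y"
  shows "LR_rules r w u c \<longleftrightarrow>
     (\<forall>i i' j. (i, j) \<in> skew_diagram r w u \<longrightarrow> (i', j) \<in> skew_diagram r w u \<longrightarrow> i < i'
        \<longrightarrow> fst (c (i, j)) < fst (c (i', j))) \<and>
     (\<forall>i i' j. (i, j) \<in> skew_diagram r w u \<longrightarrow> (i', j) \<in> skew_diagram r w u \<longrightarrow> i < i'
        \<longrightarrow> snd (c (i, j)) \<ge> snd (c (i', j))) \<and>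
     (\<forall>i j j'. (i, j) \<in> skew_diagram r w u \<longrightarrow> (i, j') \<in> skew_diagram r w u \<longrightarrow> j < j'
        \<longrightarrow> snd (c (i, j)) > snd (c (i, j'))) \<and>
     (\<forall>i j j'. (i, j) \<in> skew_diagram r w u \<longrightarrow> (i, j') \<in> skew_diagram r w u \<longrightarrow> j < j'
        \<longrightarrow> fst (c (i, j)) \<le> fst (c (i, j'))) \<and>
     (\<forall>i i' j. (i, j) \<in> young v \<longrightarrow> (i', j) \<in> young v \<longrightarrow> i < i'
        \<longrightarrow> fst (b (i, j)) < fst (b (i', j))) \<and>
     (\<forall>i i' j. (i, j) \<in> young v \<longrightarrow> (i', j) \<in> young v \<longrightarrow> i < i'
        \<longrightarrow> snd (b (i, j)) \<ge> snd (b (i', j))) \<and>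
     (\<forall>i j j'. (i, j) \<in> young v \<longrightarrow> (i, j') \<in> young v \<longrightarrow> j < j'
        \<longrightarrow> snd (b (i, j)) > snd (b (i, j'))) \<and>
     (\<forall>i j j'. (i, j) \<in> young v \<longrightarrow> (i, j') \<in> young v \<longrightarrow> j < j'
        \<longrightarrow> fst (b (i, j)) \<le> fst (b (i, j')))"
proof -
  interpret skew_young_bijection r w u v c b
    using assms(1,2,4-6) by unfold_locales auto
  have tableau: "LR_tableau r w u v c b" if "LR_rules r w u c"
    using that by unfold_locales
  show ?thesis
    by (intro iffI conjI allI impI LR_rulesI)
      (simp_all add: LR_tableau.tableau_conditions [OF tableau])
qed

end
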